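(* For every $n\in\mathbb{N}$, every valuation $\mathcal V$, every nonempty chain $c_s$ over $[n]$ and all formulas $\varphi,\psi$: (i) $\varphi^{\mathcal V}\vdash_{(n)}(\neg_{c_s}\varphi)^{\mathcal V}$; (ii) $\varphi^{\mathcal V},\psi^{\mathcal V}\vdash_{(n)}(\varphi\to_{(n)}\psi)^{\mathcal V}$.
   Context: Fix $n\in\mathbb{N}$, $n\ge 1$, and write $[n]=\{1,\dots,n\}$. Chains: a chain over $[n]$ is a finite sequence of distinct elements of $[n]$; chains with the same length and the same symbols are identified, so a chain is effectively a subset of $[n]$. $c_k$ denotes a chain with $k$ symbols, $\epsilon$ the empty chain, and $(n)$ the chain consisting of all symbols of $[n]$. For chains $c,d$: the concatenation $c\cdot d$ is the chain of symbols occurring in $c$ or in $d$; the coconcatenation $c\otimes d$ is the chain of symbols occurring in exactly one of $c,d$; $d$ is a subchain of $c$ if every symbol of $d$ is a symbol of $c$. The complementary chain $c'_{n-k}$ of $c_k$ is the chain of the symbols of $[n]$ not occurring in $c_k$. Language of $\mathbf{CPN}_n$: a countable set $P_n$ of propositional letters; constants $\perp_c$ for each chain $c$ over $[n]$ with $1\le |c|\le n-1$, and constants $\perp_{(n)}$ (contradiction) and $\top_{(n)}$ (truth); a unary connective $\neg_c$ for each nonempty chain $c$ over $[n]$ ($\neg_{(n)}$ is the strong negation; the $\neg_c$ with $|c|\le n-1$ are weak negations); a binary connective $\to_{(n)}$. Formulas: propositional letters and constants are formulas; if $\varphi,\psi$ are formulas then so are $\neg_c\varphi$ and $(\varphi\to_{(n)}\psi)$.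 Conventions: $\neg_\epsilon\varphi:=\varphi$, $\perp_\epsilon:=\top_{(n)}$, and $\perp_c$ for $c=(n)$ means $\perp_{(n)}$. Abbreviations: $\varphi\wedge_{(n)}\psi:=\neg_{(n)}(\varphi\to_{(n)}\neg_{(n)}\psi)$, $\varphi\vee_{(n)}\psi:=\neg_{(n)}\varphi\to_{(n)}\psi$, $\varphi\leftrightarrow_{(n)}\psi:=(\varphi\to_{(n)}\psi)\wedge_{(n)}(\psi\to_{(n)}\varphi)$. Axioms of $\mathbf{CPN}_n$, for all formulas $\varphi,\psi,\chi$ and all nonempty chains $c_k,c_r$ over $[n]$: (A1) $\varphi\to_{(n)}(\psi\to_{(n)}\varphi)$; (A2) $(\varphi\to_{(n)}(\psi\to_{(n)}\chi))\to_{(n)}((\varphi\to_{(n)}\psi)\to_{(n)}(\varphi\to_{(n)}\chi))$; (A3) $(\neg_{(n)}\psi\to_{(n)}\neg_{(n)}\varphi)\to_{(n)}((\neg_{(n)}\psi\to_{(n)}\varphi)\to_{(n)}\psi)$; (A4) $\varphi\to_{(n)}(\perp_{c_k}\to_{(n)}\neg_{c_k}\varphi)$; (A5) $\neg_{c_k}\neg_{c_r}\varphi\leftrightarrow_{(n)}\neg_{c_k\otimes c_r}\varphi$; (A6) $\neg_{c_k}\perp_{c_r}\leftrightarrow_{(n)}\perp_{c_k\otimes c_r}$; (A7) $\perp_{c_k}\to_{(n)}\perp_{c_r}$, whenever $c_r$ is a subchain of $c_k$. The only rule of inference is modus ponens (from $\varphi$ and $\varphi\to_{(n)}\psi$ infer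 $\psi$). For a set $\Sigma$ of formulas, $\Sigma\vdash_{(n)}\varphi$ means there is a finite sequence of formulas ending with $\varphi$, each of which is an axiom, a member of $\Sigma$, or obtained from two earlier members by modus ponens; $\vdash_{(n)}\varphi$ means $\emptyset\vdash_{(n)}\varphi$. Semantics: for each $i\in[n]$ there is a world $\mathcal M_i=\{T_i,F_i\}$ (pairwise disjoint sets). A valuation $\mathcal V$ assigns to each propositional letter $p$ and each $i\in[n]$ a value $v_i(p)\in\mathcal M_i$ (independently for different $i$). It extends to all formulas, for each $i$, by: $\bar v_i(p)=v_i(p)$ for letters; $\bar v_i(\perp_c)=F_i$ if $i$ is a symbol of $c$ and $T_i$ otherwise (so $\bar v_i(\perp_{(n)})=F_i$ and $\bar v_i(\top_{(n)})=T_i$); $\bar v_i(\neg_c\varphi)=\bar v_i(\varphi)$ if $i$ is not a symbol of $c$, and the opposite value ($T_i\leftrightarrow F_i$) if $i$ is a symbol of $c$; $\bar v_i(\varphi\to_{(n)}\psi)=F_i$ iff $\bar v_i(\varphi)=T_i$ and $\bar v_i(\psi)=F_i$, otherwise $T_i$ (hence $\wedge_{(n)},\vee_{(n)}$ behave classically in each world). Write $\bar{\mathcal V}(\varphi)=(\bar v_1(\varphi),\dots,\bar v_n(\varphi))$. A formula $\varphi$ is a tautology, written $\models_{(n)}\varphi$, iff $\bar{\mathcal V}(\varphi)=(T_1,\dots,T_n)$ for every valuation $\mathcal V$. Given a valuation $\mathcal V$ and a chain $c$ over $[n]$ (possibly empty), a formula $\varphi$ is $c$-contingent (under $\mathcal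 V$) if $\bar v_i(\varphi)=F_i$ for every symbol $i$ of $c$ and $\bar v_i(\varphi)=T_i$ for every $i\in[n]$ not in $c$. Every formula is $c$-contingent for exactly one chain $c$, and one sets $\varphi^{\mathcal V}:=\neg_c\varphi$ for that $c$ (so $\varphi^{\mathcal V}=\varphi$ when $\bar{\mathcal V}(\varphi)=(T_1,\dots,T_n)$). *)

theory Defs
  imports Main
begin

text \<open>Chains over [n] are represented as subsets of {1..n} (sequences with the same
symbols are identified). Formulas of CPN_n:\<close>

datatype form =
    PVar nat
  | Bot "nat set"         (* \<bottom>_c ; Bot {} = \<top>_(n), Bot {1..n} = \<bottom>_(n) *)
  | Neg "nat set" form
  | Imp form form

definition chain :: "nat \<Rightarrow> nat set \<Rightarrow> bool" where
  "chain n c \<longleftrightarrow> c \<subseteq> {1..n}"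

definition full :: "nat \<Rightarrow> nat set" where
  "full n = {1..n}"

fun wf :: "nat \<Rightarrow> form \<Rightarrow> bool" where
  "wf n (PVar p) = True"
| "wf n (Bot c) = chain n c"
| "wf n (Neg c \<phi>) = (chain n c \<and> c \<noteq> {} \<and> wf n \<phi>)"
| "wf n (Imp \<phi> \<psi>) = (wf n \<phi> \<and> wf n \<psi>)"

definition neg :: "nat set \<Rightarrow> form \<Rightarrow> form" where
  "neg c \<phi> = (if c = {} then \<phi> else Neg c \<phi>)"

definition coconc :: "nat set \<Rightarrow> nat set \<Rightarrow> nat set" where
  "coconc c d = (c - d) \<union> (d - c)"

definition Conj :: "nat \<Rightarrow> form \<Rightarrow> form \<Rightarrow> form" where
  "Conj n \<phi> \<psi> = Neg (full n) (Imp \<phi> (Neg (full n) \<psi>))"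

definition Iff :: "nat \<Rightarrow> form \<Rightarrow> form \<Rightarrow> form" where
  "Iff n \<phi> \<psi> = Conj n (Imp \<phi> \<psi>) (Imp \<psi> \<phi>)"

inductive axiom :: "nat \<Rightarrow> form \<Rightarrow> bool" for n where
  A1: "\<lbrakk>wf n \<phi>; wf n \<psi>\<rbrakk> \<Longrightarrow> axiom n (Imp \<phi> (Imp \<psi> \<phi>))"
| A2: "\<lbrakk>wf n \<phi>; wf n \<psi>; wf n \<chi>\<rbrakk> \<Longrightarrow>
     axiom n (Imp (Imp \<phi> (Imp \<psi> \<chi>)) (Imp (Imp \<phi> \<psi>) (Imp \<phi> \<chi>)))"
| A3: "\<lbrakk>wf n \<phi>; wf n \<psi>\<rbrakk> \<Longrightarrow>
     axiom n (Imp (Imp (Neg (full n) \<psi>) (Neg (full n) \<phi>))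
                  (Imp (Imp (Neg (full n) \<psi>) \<phi>) \<psi>))"
| A4: "\<lbrakk>wf n \<phi>; chain n ck; ck \<noteq> {}\<rbrakk> \<Longrightarrow>
     axiom n (Imp \<phi> (Imp (Bot ck) (Neg ck \<phi>)))"
| A5: "\<lbrakk>wf n \<phi>; chain n ck; ck \<noteq> {}; chain n cr; cr \<noteq> {}\<rbrakk> \<Longrightarrow>
     axiom n (Iff n (Neg ck (Neg cr \<phi>)) (neg (coconc ck cr) \<phi>))"
| A6: "\<lbrakk>chain n ck; ck \<noteq> {}; chain n cr; cr \<noteq> {}\<rbrakk> \<Longrightarrow>
     axiom n (Iff n (Neg ck (Bot cr)) (Bot (coconc ck cr)))"
| A7: "\<lbrakk>chain n ck; ck \<noteq> {}; chain n cr; cr \<noteq> {}; cr \<subseteq> ck\<rbrakk> \<Longrightarrow>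
     axiom n (Imp (Bot ck) (Bot cr))"

inductive derives :: "nat \<Rightarrow> form set \<Rightarrow> form \<Rightarrow> bool" for n \<Sigma> where
  ax: "axiom n \<phi> \<Longrightarrow> derives n \<Sigma> \<phi>"
| hyp: "\<phi> \<in> \<Sigma> \<Longrightarrow> derives n \<Sigma> \<phi>"
| mp: "\<lbrakk>derives n \<Sigma> \<phi>; derives n \<Sigma> (Imp \<phi> \<psi>)\<rbrakk> \<Longrightarrow> derives n \<Sigma> \<psi>"

text \<open>Semantics: a valuation assigns to each letter p and world i a truth value
(True = T_i, False = F_i).\<close>
type_synonym valuation = "nat \<Rightarrow> nat \<Rightarrow> bool"

fun eval :: "valuation \<Rightarrow> nat \<Rightarrow> form \<Rightarrow> bool" where
  "eval v i (PVar p) = v p i"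
| "eval v i (Bot c) = (i \<notin> c)"
| "eval v i (Neg c \<phi>) = (if i \<in> c then \<not> eval v i \<phi> else eval v i \<phi>)"
| "eval v i (Imp \<phi> \<psi>) = (eval v i \<phi> \<longrightarrow> eval v i \<psi>)"

text \<open>The unique chain c for which \<phi> is c-contingent under v.\<close>
definition contchain :: "nat \<Rightarrow> valuation \<Rightarrow> form \<Rightarrow> nat set" where
  "contchain n v \<phi> = {i \<in> {1..n}. \<not> eval v i \<phi>}"

definition vform :: "nat \<Rightarrow> valuation \<Rightarrow> form \<Rightarrow> form" where
  "vform n v \<phi> = neg (contchain n v \<phi>) \<phi>"

end

theory Submission
  imports Defs
begin

text \<open>Write a for the contingency chain of \<phi>, so that \<phi>^V is \<not>_a \<phi>. A formula \<not>_c X is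
derivable exactly when X \<rightarrow> \<bottom>_c and \<bottom>_c \<rightarrow> X are: for the converse one splits on \<bottom>_c; if it
holds, A4 turns X into \<not>_c X, and otherwise \<bottom>_([n]-c) holds, A4 yields \<not>_([n]-c) of the strong
negation of X, and A5 composes the two negations into \<not>_c X. Part (i) is then a single use of A5,
the contingency chain of \<not>_c \<phi> being a \<otimes> c. For part (ii), the constants \<bottom>_c derivably form the
Boolean algebra of chains (A6, A7), so \<phi> \<leftrightarrow> \<bottom>_a and \<psi> \<leftrightarrow> \<bottom>_b give (\<phi> \<rightarrow> \<psi>) \<leftrightarrow> \<bottom>_(b-a), and
b - a is the contingency chain of \<phi> \<rightarrow> \<psi>.\<close>

lemma neg_empty [simp]: "neg {} X = X"
  by (simp add: neg_def)

lemma wf_neg: "chain n c \<Longrightarrow> wf n X \<Longrightarrow> wf n (neg c X)"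
  by (simp add: neg_def)

lemma chain_coconc: "chain n c \<Longrightarrow> chain n d \<Longrightarrow> chain n (coconc c d)"
  by (auto simp: chain_def coconc_def)

lemma chain_Diff: "chain n c \<Longrightarrow> chain n (c - d)"
  by (auto simp: chain_def)

lemma chain_contchain: "chain n (contchain n v X)"
  by (auto simp: chain_def contchain_def)

lemma contchain_Neg: "chain n c \<Longrightarrow> contchain n v (Neg c X) = coconc (contchain n v X) c"
  by (auto simp: chain_def contchain_def coconc_def)

lemma contchain_Imp: "contchain n v (Imp X Y) = contchain n v Y - contchain n v X"
  by (auto simp: contchain_def)

lemma derives_mono: "derives n S X \<Longrightarrow> S \<subseteq> T \<Longrightarrow> derives n T X"
  by (induction rule: derives.induct) (auto intro: derives.intros)

lemma derives_insert: "derives n S X \<Longrightarrow> derives n (insert A S) X"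
  by (erule derives_mono) auto

lemma derives_assm: "derives n (insert A S) A"
  by (simp add: derives.hyp)

locale cpn =
  fixes n :: nat
  assumes n_ge_1: "1 \<le> n"
begin

abbreviation snot :: "form \<Rightarrow> form" where
  "snot X \<equiv> Neg (full n) X"

lemma full_nonempty [simp]: "full n \<noteq> {}"
  using n_ge_1 by (auto simp: full_def)

lemma chain_full [simp]: "chain n (full n)"
  by (simp add: chain_def full_def)

lemma neg_full [simp]: "neg (full n) X = snot X"
  by (simp add: neg_def)

text \<open>Axioms are instantiated with well-formed formulas only, so the deduction theorem and its
consequences need well-formed hypothesis sets.\<close>

definition wf_set :: "form set \<Rightarrow> bool" where
  "wf_set S \<longleftrightarrow> (\<forall>X\<in>S. wf n X)"

lemma wf_set_insert [simp]: "wf_set (insert A S) \<longleftrightarrow> wf n A \<and> wf_set S"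
  by (simp add: wf_set_def)

lemma wf_set_empty [simp]: "wf_set {}"
  by (simp add: wf_set_def)

lemma wf_axiom: "axiom n X \<Longrightarrow> wf n X"
  by (induction rule: axiom.induct) (auto simp: Iff_def Conj_def chain_coconc wf_neg)

lemma wf_derives: "derives n S X \<Longrightarrow> wf_set S \<Longrightarrow> wf n X"
  by (induction rule: derives.induct) (auto simp: wf_axiom wf_set_def)

subsection \<open>Propositional reasoning\<close>

lemma derives_A1: "wf n \<phi> \<Longrightarrow> wf n \<psi> \<Longrightarrow> derives n S (Imp \<phi> (Imp \<psi> \<phi>))"
  by (intro derives.ax axiom.A1)

lemma derives_A2: "wf n \<phi> \<Longrightarrow> wf n \<psi> \<Longrightarrow> wf n \<chi> \<Longrightarrow>
    derives n S (Imp (Imp \<phi> (Imp \<psi> \<chi>)) (Imp (Imp \<phi> \<psi>) (Imp \<phi> \<chi>)))"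
  by (intro derives.ax axiom.A2)

lemma derives_A3: "wf n \<phi> \<Longrightarrow> wf n \<psi> \<Longrightarrow>
    derives n S (Imp (Imp (snot \<psi>) (snot \<phi>)) (Imp (Imp (snot \<psi>) \<phi>) \<psi>))"
  by (intro derives.ax axiom.A3)

lemma derives_mp2:
  "derives n S (Imp A (Imp B C)) \<Longrightarrow> derives n S A \<Longrightarrow> derives n S B \<Longrightarrow> derives n S C"
  by (meson derives.mp)

lemma derives_weaken_imp: "derives n S \<psi> \<Longrightarrow> wf n \<phi> \<Longrightarrow> wf_set S \<Longrightarrow> derives n S (Imp \<phi> \<psi>)"
  using derives.mp derives_A1 wf_derives by blast

lemma derives_imp_refl: "wf n A \<Longrightarrow> derives n S (Imp A A)"
  using derives_mp2[OF derives_A2[of A "Imp A A" A] derives_A1 derives_A1] by simp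

theorem deduction:
  assumes "derives n (insert A S) B" "wf n A" "wf_set S"
  shows "derives n S (Imp A B)"
  using assms(1)
proof induction
  case (ax X)
  then show ?case using assms(2,3) by (simp add: derives.ax derives_weaken_imp)
next
  case (hyp X)
  then show ?case
    using assms(2,3) derives_imp_refl derives_weaken_imp derives.hyp wf_set_def by auto
next
  case (mp X Y)
  have "wf n X" "wf n Y"
    using wf_derives[OF mp.hyps(1)] wf_derives[OF mp.hyps(2)] assms(2,3) by auto
  then show ?case using derives_mp2[OF derives_A2[of A X Y] mp.IH(2,1)] assms(2) by simp
qed

lemma derives_notnot_elim:
  assumes "derives n S (snot (snot B))" "wf_set S"
  shows "derives n S B"
proof -
  have "wf n B" using wf_derives[OF assms] by simp
  then show ?thesis
    using derives_mp2[OF derives_A3[of "snot B" B] derives_weaken_imp[OF assms(1)]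
        derives_imp_refl] assms(2)
    by simp
qed

lemma derives_notnot_intro:
  assumes "derives n S B" "wf_set S"
  shows "derives n S (snot (snot B))"
proof -
  have wf: "wf n B" using wf_derives[OF assms] .
  have "derives n S (Imp (snot (snot (snot B))) (snot B))"
    by (rule deduction, rule derives_notnot_elim) (auto intro: derives_assm simp: wf assms(2))
  then show ?thesis
    using derives_mp2[OF derives_A3[of B "snot (snot B)"] _ derives_weaken_imp[OF assms(1)]]
      wf assms(2)
    by simp
qed

lemma derives_explosion:
  assumes "derives n S (snot A)" "derives n S A" "wf n B" "wf_set S"
  shows "derives n S B"
proof -
  have "wf n A" using wf_derives[OF assms(2,4)] .
  then show ?thesis
    using derives_mp2[OF derives_A3[of A B] derives_weaken_imp[OF assms(1)]
        derives_weaken_imp[OF assms(2)]] assms(3,4)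
    by simp
qed

lemma derives_contrapos:
  assumes "derives n S (Imp (snot B) (snot A))" "wf n A" "wf n B" "wf_set S"
  shows "derives n S (Imp A B)"
proof (rule deduction[OF _ assms(2,4)])
  let ?T = "insert A S"
  have "derives n ?T (Imp (snot B) A)"
    using assms by (simp add: derives_assm derives_weaken_imp)
  then show "derives n ?T B"
    using derives_mp2[OF derives_A3[of A B] derives_insert[OF assms(1)]] assms(2,3) by simp
qed

lemma derives_contrapos_rev:
  assumes "derives n S (Imp A B)" "wf_set S"
  shows "derives n S (Imp (snot B) (snot A))"
proof -
  have wf: "wf n A" "wf n B" using wf_derives[OF assms] by auto
  have "derives n S (Imp (snot (snot A)) (snot (snot B)))"
  proof (rule deduction)
    let ?T = "insert (snot (snot A)) S"
    have "derives n ?T A" by (rule derives_notnot_elim) (auto intro: derives_assm simp: wf assms)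
    then have "derives n ?T B" using derives_insert[OF assms(1)] derives.mp by blast
    then show "derives n ?T (snot (snot B))" by (rule derives_notnot_intro) (simp add: wf assms)
  qed (auto simp: wf assms)
  then show ?thesis by (rule derives_contrapos) (auto simp: wf assms)
qed

lemma derives_cases:
  assumes "derives n S (Imp A B)" "derives n S (Imp (snot A) B)" "wf_set S"
  shows "derives n S B"
proof -
  have "wf n A" "wf n B" using wf_derives[OF assms(1,3)] by auto
  then show ?thesis
    using derives_mp2[OF derives_A3[of "snot A" B] derives_contrapos_rev[OF assms(2,3)]
        derives_contrapos_rev[OF assms(1,3)]]
    by simp
qed

lemma derives_Conj_elim2:
  assumes "derives n S (Conj n P Q)" "wf_set S"
  shows "derives n S Q"
proof -
  have "wf n P" "wf n Q" using wf_derives[OF assms] by (auto simp: Conj_def)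
  then have "derives n S (Imp (snot (Imp P (snot Q))) (snot (snot Q)))"
    using derives_A1[of "snot Q" P] derives_contrapos_rev assms(2) by auto
  then show ?thesis
    using assms derives.mp derives_notnot_elim unfolding Conj_def by blast
qed

lemma derives_Conj_elim1:
  assumes "derives n S (Conj n P Q)" "wf_set S"
  shows "derives n S P"
proof -
  have wf: "wf n P" "wf n Q" using wf_derives[OF assms] by (auto simp: Conj_def)
  have "derives n S (Imp (snot P) (Imp P (snot Q)))"
  proof (intro deduction)
    show "derives n (insert P (insert (snot P) S)) (snot Q)"
      by (rule derives_explosion[of _ P]) (auto intro: derives_assm derives_insert simp: wf assms)
  qed (auto simp: wf assms)
  then have "derives n S (Imp (snot (Imp P (snot Q))) (snot (snot P)))"
    using derives_contrapos_rev assms(2) by blast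
  then show ?thesis
    using assms derives.mp derives_notnot_elim unfolding Conj_def by blast
qed

lemma derives_Iff_mp: "derives n S (Iff n X Y) \<Longrightarrow> derives n S X \<Longrightarrow> wf_set S \<Longrightarrow> derives n S Y"
  unfolding Iff_def by (meson derives.mp derives_Conj_elim1)

lemma derives_Iff_mp_rev: "derives n S (Iff n X Y) \<Longrightarrow> derives n S Y \<Longrightarrow> wf_set S \<Longrightarrow> derives n S X"
  unfolding Iff_def by (meson derives.mp derives_Conj_elim2)

subsection \<open>Weak negations and the constants \<open>\<bottom>\<^sub>c\<close>\<close>

lemma derives_neg_intro:
  assumes "derives n S X" "derives n S (Bot c)" "chain n c" "wf_set S"
  shows "derives n S (neg c X)"
proof (cases "c = {}")
  case False
  have "derives n S (Imp X (Imp (Bot c) (Neg c X)))"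
    using wf_derives[OF assms(1,4)] assms(3) False by (intro derives.ax axiom.A4)
  then show ?thesis using derives_mp2 assms(1,2) False by (simp add: neg_def)
qed (use assms in simp)

lemma derives_neg_neg_iff:
  assumes "chain n c" "chain n d" "wf n X" "wf_set S"
  shows "derives n S (neg c (neg d X)) \<longleftrightarrow> derives n S (neg (coconc c d) X)"
proof (cases "c = {} \<or> d = {}")
  case True
  then show ?thesis by (auto simp: coconc_def)
next
  case False
  then have "derives n S (Iff n (Neg c (Neg d X)) (neg (coconc c d) X))"
    using assms by (intro derives.ax axiom.A5) auto
  moreover have "neg c (neg d X) = Neg c (Neg d X)"
    using False by (simp add: neg_def)
  ultimately show ?thesis using derives_Iff_mp derives_Iff_mp_rev assms(4) by metis
qed

lemma derives_neg_Bot: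
  assumes "derives n S (neg d (Bot c))" "chain n d" "chain n c" "c \<noteq> {}" "wf_set S"
  shows "derives n S (Bot (coconc d c))"
proof (cases "d = {}")
  case True
  then show ?thesis using assms(1) by (simp add: coconc_def)
next
  case False
  then have "derives n S (Iff n (Neg d (Bot c)) (Bot (coconc d c)))"
    using assms by (intro derives.ax axiom.A6)
  then show ?thesis using derives_Iff_mp assms(1,5) False by (simp add: neg_def)
qed

lemma derives_Bot_empty: "wf_set S \<Longrightarrow> derives n S (Bot {})"
proof -
  let ?F = "Bot (full n)"
  assume S: "wf_set S"
  \<comment> \<open>By A4, \<open>\<bottom>_[n]\<close> implies its own strong negation, so the latter holds outright; A6 then
      rewrites \<open>\<not>_[n] \<bottom>_[n]\<close> to \<open>\<bottom>_\<emptyset>\<close>.\<close>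
  have "derives n S (Imp ?F (snot ?F))"
    by (rule deduction, simp flip: neg_full, rule derives_neg_intro)
       (auto intro: derives_assm simp: S)
  then have "derives n S (snot ?F)"
    using derives_cases derives_imp_refl S by (metis chain_full wf.simps(2,3) full_nonempty)
  then have "derives n S (Bot (coconc (full n) (full n)))"
    using derives_neg_Bot S by simp
  then show ?thesis by (simp add: coconc_def)
qed

lemma derives_Bot_mono:
  assumes "derives n S (Bot p)" "chain n p" "r \<subseteq> p" "wf_set S"
  shows "derives n S (Bot r)"
proof (cases "r = {}")
  case True
  then show ?thesis using derives_Bot_empty assms(4) by simp
next
  case False
  have "chain n r" using assms(2,3) by (auto simp: chain_def)
  then have "derives n S (Imp (Bot p) (Bot r))"
    using assms False by (intro derives.ax axiom.A7) auto
  then show ?thesis using assms(1) derives.mp by blast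
qed

lemma derives_Bot_union:
  assumes "derives n S (Bot p)" "derives n S (Bot q)" "chain n p" "chain n q" "wf_set S"
  shows "derives n S (Bot (p \<union> q))"
proof (cases "p - q = {}")
  case True
  then show ?thesis using assms(2) by (simp add: Un_absorb1)
next
  case False
  have "derives n S (Bot (p - q))"
    using derives_Bot_mono assms(1,3,5) by blast
  then have "derives n S (neg q (Bot (p - q)))"
    using derives_neg_intro assms(2,4,5) by blast
  then have "derives n S (Bot (coconc q (p - q)))"
    using derives_neg_Bot assms chain_Diff False by blast
  moreover have "coconc q (p - q) = p \<union> q"
    by (auto simp: coconc_def)
  ultimately show ?thesis by simp
qed

lemma derives_Bot_compl:
  assumes "derives n S (snot (Bot c))" "chain n c" "wf_set S"
  shows "derives n S (Bot (full n - c))"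
proof (cases "c = {}")
  case True
  then show ?thesis
    using derives_explosion[OF assms(1)] derives_Bot_empty assms by (simp add: full_def chain_def)
next
  case False
  then have "derives n S (Bot (coconc (full n) c))"
    using derives_neg_Bot assms by simp
  moreover have "coconc (full n) c = full n - c"
    using assms(2) by (auto simp: coconc_def chain_def full_def)
  ultimately show ?thesis by simp
qed

lemma derives_neg_D:
  assumes "derives n S (neg c X)" "chain n c" "wf n X" "wf_set S"
  shows "derives n S (Imp (Bot c) X)" and "derives n S (Imp X (Bot c))"
proof -
  have wf: "wf n (Bot c)" using assms(2) by simp
  show "derives n S (Imp (Bot c) X)"
  proof (rule deduction[OF _ wf assms(4)])
    let ?T = "insert (Bot c) S"
    have wfT: "wf_set ?T" using wf assms(4) by simp
    have "derives n ?T (neg c (neg c X))"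
      using derives_neg_intro[OF derives_insert[OF assms(1)] derives_assm assms(2) wfT] .
    then show "derives n ?T X"
      using derives_neg_neg_iff[OF assms(2,2,3) wfT] by (simp add: coconc_def)
  qed
  have "derives n S (Imp (snot (Bot c)) (snot X))"
  proof (rule deduction)
    let ?T = "insert (snot (Bot c)) S"
    have wfT: "wf_set ?T" using wf assms(4) by simp
    have "derives n ?T (neg (full n - c) (neg c X))"
      using derives_neg_intro[OF derives_insert[OF assms(1)]
          derives_Bot_compl[OF derives_assm assms(2) wfT] chain_Diff[OF chain_full] wfT] .
    moreover have "coconc (full n - c) c = full n"
      using assms(2) by (auto simp: coconc_def chain_def full_def)
    ultimately show "derives n ?T (snot X)"
      using derives_neg_neg_iff[OF chain_Diff assms(2,3) wfT] by simp
  qed (use wf assms in auto)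
  then show "derives n S (Imp X (Bot c))"
    using derives_contrapos wf assms(3,4) by blast
qed

lemma derives_neg_I:
  assumes "derives n S (Imp X (Bot c))" "derives n S (Imp (Bot c) X)" "chain n c" "wf n X"
    "wf_set S"
  shows "derives n S (neg c X)"
proof -
  have wf: "wf n (Bot c)" "wf n (neg c X)" using assms(3,4) wf_neg by auto
  have "derives n S (Imp (Bot c) (neg c X))"
  proof (rule deduction[OF _ wf(1) assms(5)])
    let ?T = "insert (Bot c) S"
    show "derives n ?T (neg c X)"
      using derives_neg_intro[OF derives.mp[OF derives_assm derives_insert[OF assms(2)]]
          derives_assm assms(3)] assms(5) wf by simp
  qed
  moreover have "derives n S (Imp (snot (Bot c)) (neg c X))"
  proof (rule deduction)
    let ?T = "insert (snot (Bot c)) S"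
    have wfT: "wf_set ?T" using wf assms(5) by simp
    have "derives n ?T (snot X)"
      using derives.mp[OF derives_assm derives_insert[OF derives_contrapos_rev[OF assms(1,5)]]] .
    then have "derives n ?T (neg (full n - c) (neg (full n) X))"
      using derives_neg_intro[OF _ derives_Bot_compl[OF derives_assm assms(3) wfT]
          chain_Diff[OF chain_full] wfT]
      by simp
    moreover have "coconc (full n - c) (full n) = c"
      using assms(3) by (auto simp: coconc_def chain_def full_def)
    ultimately show "derives n ?T (neg c X)"
      using derives_neg_neg_iff[OF chain_Diff chain_full assms(4) wfT] by simp
  qed (use wf assms in auto)
  ultimately show ?thesis using derives_cases assms(5) by blast
qed

lemma derives_Bot_diff_imp:
  assumes "derives n S (Imp \<phi> (Bot a))" "derives n S (Imp (Bot b) \<psi>)" "chain n a" "chain n b"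
    "wf n \<phi>" "wf_set S"
  shows "derives n S (Imp (Bot (b - a)) (Imp \<phi> \<psi>))"
proof (intro deduction)
  let ?T = "insert \<phi> (insert (Bot (b - a)) S)"
  have wfT: "wf_set ?T" using assms(4-6) chain_Diff by simp
  have "derives n ?T (Bot a)"
    using derives.mp[OF derives_assm derives_insert[OF derives_insert[OF assms(1)]]] .
  then have "derives n ?T (Bot (a \<union> (b - a)))"
    using derives_Bot_union[OF _ derives_insert[OF derives_assm] assms(3) chain_Diff[OF assms(4)] wfT]
    by blast
  moreover have "chain n (a \<union> (b - a))" "b \<subseteq> a \<union> (b - a)"
    using assms(3,4) by (auto simp: chain_def)
  ultimately have "derives n ?T (Bot b)"
    using derives_Bot_mono wfT by blast
  then show "derives n ?T \<psi>"
    using derives.mp derives_insert[OF derives_insert[OF assms(2)]] by blast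
qed (use assms chain_Diff in auto)

lemma derives_imp_Bot_diff:
  assumes "derives n S (Imp (Bot a) \<phi>)" "derives n S (Imp \<psi> (Bot b))" "chain n a" "chain n b"
    "wf n \<phi>" "wf n \<psi>" "wf_set S"
  shows "derives n S (Imp (Imp \<phi> \<psi>) (Bot (b - a)))"
proof (rule deduction)
  let ?T = "insert (Imp \<phi> \<psi>) S"
  have wfT: "wf_set ?T" using assms(5-7) by simp
  have "derives n ?T (Imp (Bot a) (Bot (b - a)))"
  proof (rule deduction)
    let ?U = "insert (Bot a) ?T"
    have "derives n ?U \<psi>"
      using derives.mp[OF derives.mp[OF derives_assm derives_insert[OF derives_insert[OF assms(1)]]]
          derives_insert[OF derives_assm]] .
    then have "derives n ?U (Bot b)"
      using derives.mp derives_insert[OF derives_insert[OF assms(2)]] by blast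
    then show "derives n ?U (Bot (b - a))"
      using derives_Bot_mono[OF _ assms(4) Diff_subset] assms(3) wfT by simp
  qed (use assms wfT in auto)
  moreover have "derives n ?T (Imp (snot (Bot a)) (Bot (b - a)))"
  proof (rule deduction)
    let ?U = "insert (snot (Bot a)) ?T"
    have wfU: "wf_set ?U" using assms(3) wfT by simp
    have "derives n ?U (Bot (full n - a))"
      using derives_Bot_compl[OF derives_assm assms(3) wfU] .
    moreover have "b - a \<subseteq> full n - a"
      using assms(4) by (auto simp: chain_def full_def)
    ultimately show "derives n ?U (Bot (b - a))"
      using derives_Bot_mono[OF _ chain_Diff[OF chain_full]] wfU by blast
  qed (use assms wfT in auto)
  ultimately show "derives n ?T (Bot (b - a))"
    using derives_cases wfT by blast
qed (use assms in auto)

lemma derives_neg_Neg: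
  assumes "derives n S (neg a \<phi>)" "chain n a" "chain n c" "c \<noteq> {}" "wf n \<phi>" "wf_set S"
  shows "derives n S (neg (coconc a c) (Neg c \<phi>))"
proof -
  have "coconc (coconc a c) c = a" by (auto simp: coconc_def)
  then have "derives n S (neg (coconc a c) (neg c \<phi>))"
    using derives_neg_neg_iff[OF chain_coconc[OF assms(2,3)] assms(3,5,6)] assms(1) by simp
  then show ?thesis using assms(4) by (simp add: neg_def)
qed

lemma derives_neg_Imp:
  assumes "derives n S (neg a \<phi>)" "derives n S (neg b \<psi>)" "chain n a" "chain n b"
    "wf n \<phi>" "wf n \<psi>" "wf_set S"
  shows "derives n S (neg (b - a) (Imp \<phi> \<psi>))"
proof (rule derives_neg_I)
  show "derives n S (Imp (Imp \<phi> \<psi>) (Bot (b - a)))"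
    using derives_imp_Bot_diff[OF derives_neg_D(1)[OF assms(1,3,5,7)]
        derives_neg_D(2)[OF assms(2,4,6,7)]] assms by blast
  show "derives n S (Imp (Bot (b - a)) (Imp \<phi> \<psi>))"
    using derives_Bot_diff_imp[OF derives_neg_D(2)[OF assms(1,3,5,7)]
        derives_neg_D(1)[OF assms(2,4,6,7)]] assms by blast
qed (use assms chain_Diff in auto)

end

theorem mainTheorem13:
  fixes n :: nat and v :: valuation and c :: "nat set" and \<phi> \<psi> :: form
  assumes "n \<ge> 1" and "chain n c" and "c \<noteq> {}" and "wf n \<phi>" and "wf n \<psi>"
  shows "derives n {vform n v \<phi>} (vform n v (Neg c \<phi>)) \<and>
         derives n {vform n v \<phi>, vform n v \<psi>} (vform n v (Imp \<phi> \<psi>))"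
proof -
  interpret cpn n using assms(1) by unfold_locales
  let ?a = "contchain n v \<phi>" and ?b = "contchain n v \<psi>"
  let ?S = "{neg ?a \<phi>, neg ?b \<psi>}"
  have wf_S: "wf_set {neg ?a \<phi>}" "wf_set ?S"
    using assms(4,5) chain_contchain wf_neg by auto
  have "derives n {neg ?a \<phi>} (neg (coconc ?a c) (Neg c \<phi>))"
    using derives_neg_Neg[OF derives.hyp chain_contchain assms(2-4) wf_S(1)] by simp
  moreover have "derives n ?S (neg (?b - ?a) (Imp \<phi> \<psi>))"
    using derives_neg_Imp[OF derives.hyp derives.hyp chain_contchain chain_contchain
        assms(4,5) wf_S(2)]
    by simp
  ultimately show ?thesis
    by (simp add: vform_def contchain_Neg[OF assms(2)] contchain_Imp)
qed

end
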